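(* Let $(X,Y)$ be a bivariate normal random vector in $\mathbb R^2$ with $\mathrm{Var}(X)>0$, $\mathrm{Var}(Y)>0$ and Pearson correlation $\varrho$. Using the metric $\delta(x,y)=|x-y|$ on $\mathbb R$ and the Manhattan metric on pairs, \[ \mathrm{eCor}(X,Y)\le\Big[1-\sqrt{1-\varrho^2}\,\Big]^{1/2}\le|\varrho|, \] and the last inequality is strict unless $\varrho\in\{-1,0,1\}$.
   Context: For probability measures $\mu,\nu$ on a metric space $(S,\rho)$ with finite first moments, $e(\mu,\nu)=\inf_\gamma\int\rho\,d\gamma$ over all couplings $\gamma$ of $\mu,\nu$ (earth mover's / Wasserstein-1 distance). For real random variables $X,Y$, pairs are given the Manhattan metric $d[(x,y),(u,v)]=|x-u|+|y-v|$. The earth mover's covariance is $\mathrm{eCov}(X,Y)=e\big[(X,Y),(X',Y')\big]$, the distance (w.r.t. $d$) between the joint law of $(X,Y)$ and the product of its marginals (law of $(X',Y')$ with $X'\overset d=X$, $Y'\overset d=Y$, $X',Y'$ independent). The earth mover's variance is $\mathrm{eVar}(X)=\mathrm{eCov}(X,X)$, and the earth mover's correlation is $\mathrm{eCor}(X,Y)=\mathrm{eCov}(X,Y)/\min\{\mathrm{eVar}(X),\mathrm{eVar}(Y)\}$, defined when the denominator is positive. *)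

theory Defs
  imports "HOL-Probability.Probability"
begin

definition couplings :: "'a::topological_space measure \<Rightarrow> 'a measure \<Rightarrow> ('a \<times> 'a) measure set" where
  "couplings \<mu> \<nu> = {\<gamma>. prob_space \<gamma> \<and> sets \<gamma> = sets (borel :: ('a \<times> 'a) measure)
      \<and> distr \<gamma> borel fst = \<mu> \<and> distr \<gamma> borel snd = \<nu>}"

definition emd :: "('a::topological_space \<Rightarrow> 'a \<Rightarrow> real) \<Rightarrow> 'a measure \<Rightarrow> 'a measure \<Rightarrow> ennreal" where
  "emd d \<mu> \<nu> = (INF \<gamma> \<in> couplings \<mu> \<nu>. \<integral>\<^sup>+ z. ennreal (d (fst z) (snd z)) \<partial>\<gamma>)"

definition manhattan :: "real \<times> real \<Rightarrow> real \<times> real \<Rightarrow> real" where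
  "manhattan p q = \<bar>fst p - fst q\<bar> + \<bar>snd p - snd q\<bar>"

definition eCov :: "'w measure \<Rightarrow> ('w \<Rightarrow> real) \<Rightarrow> ('w \<Rightarrow> real) \<Rightarrow> ennreal" where
  "eCov M X Y = emd manhattan (distr M borel (\<lambda>\<omega>. (X \<omega>, Y \<omega>)))
                              (distr M borel X \<Otimes>\<^sub>M distr M borel Y)"

definition eVar :: "'w measure \<Rightarrow> ('w \<Rightarrow> real) \<Rightarrow> ennreal" where
  "eVar M X = eCov M X X"

definition eCor :: "'w measure \<Rightarrow> ('w \<Rightarrow> real) \<Rightarrow> ('w \<Rightarrow> real) \<Rightarrow> real" where
  "eCor M X Y = enn2real (eCov M X Y) / min (enn2real (eVar M X)) (enn2real (eVar M Y))"

definition gaussian_rv :: "'w measure \<Rightarrow> ('w \<Rightarrow> real) \<Rightarrow> bool" where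
  "gaussian_rv M Z \<longleftrightarrow> Z \<in> borel_measurable M \<and>
     ((\<exists>c. AE \<omega> in M. Z \<omega> = c) \<or> (\<exists>m \<sigma>. \<sigma> > 0 \<and> distributed M lborel Z (normal_density m \<sigma>)))"

definition bivariate_normal :: "'w measure \<Rightarrow> ('w \<Rightarrow> real) \<Rightarrow> ('w \<Rightarrow> real) \<Rightarrow> bool" where
  "bivariate_normal M X Y \<longleftrightarrow> (\<forall>a b. gaussian_rv M (\<lambda>\<omega>. a * X \<omega> + b * Y \<omega>))"

definition covariance :: "'w measure \<Rightarrow> ('w \<Rightarrow> real) \<Rightarrow> ('w \<Rightarrow> real) \<Rightarrow> real" where
  "covariance M X Y = (\<integral>\<omega>. (X \<omega> - (\<integral>\<omega>. X \<omega> \<partial>M)) * (Y \<omega> - (\<integral>\<omega>. Y \<omega> \<partial>M)) \<partial>M)"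

definition pearson :: "'w measure \<Rightarrow> ('w \<Rightarrow> real) \<Rightarrow> ('w \<Rightarrow> real) \<Rightarrow> real" where
  "pearson M X Y = covariance M X Y / sqrt (covariance M X X * covariance M Y Y)"

end

theory Submission
  imports Defs
begin

text \<open>
  Let \<open>k = sqrt (1 - \<rho>\<^sup>2)\<close>. Regressing \<open>Y\<close> on \<open>X\<close> leaves a Gaussian residual \<open>R\<close> that is
  uncorrelated with \<open>X\<close>, hence independent of it (the joint characteristic function factorises),
  and has variance \<open>k\<^sup>2 Var Y\<close>. Rescaling \<open>R\<close> by \<open>1 / k\<close> and recentring gives a copy \<open>Y'\<close> of \<open>Y\<close>
  independent of \<open>X\<close>, so \<open>((X, Y), (X, Y'))\<close> couples the joint law with the product of the
  marginals and \<open>eCov(X, Y) \<le> E\<bar>Y - Y'\<bar>\<close>. Here \<open>Y - Y'\<close> is centred Gaussian with variance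
  \<open>2 (1 - k) Var Y\<close>, whereas \<open>eVar(Y)\<close> is at least Gini's mean difference \<open>E\<bar>Y\<^sub>1 - Y\<^sub>2\<bar>\<close> of two
  independent copies, a centred Gaussian with variance \<open>2 Var Y\<close>; so the ratio is at most
  \<open>sqrt (1 - k)\<close>, and symmetrically with \<open>X\<close> in place of \<open>Y\<close>. Finally
  \<open>1 - k \<le> 1 - k\<^sup>2 = \<rho>\<^sup>2\<close>, strictly unless \<open>k \<in> {0, 1}\<close>.
\<close>

section \<open>Gaussian random variables\<close>

lemma normal_distributed_char:
  assumes "prob_space M" and "distributed M lborel Z (normal_density m \<sigma>)" and "\<sigma> > 0"
  shows "(CLINT \<omega>|M. iexp (t * Z \<omega>)) = iexp (t * m) * complex_of_real (exp (- (t\<^sup>2 * \<sigma>\<^sup>2) / 2))"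
proof -
  interpret prob_space M by fact
  have [measurable]: "Z \<in> borel_measurable M"
    using distributed_measurable[OF assms(2)] by simp
  have "distributed M lborel (\<lambda>\<omega>. (Z \<omega> - m) / \<sigma>) std_normal_density"
    using normal_standard_normal_convert[OF assms(3)] assms(2) by simp
  then have std: "distr M lborel (\<lambda>\<omega>. (Z \<omega> - m) / \<sigma>) = std_normal_distribution"
    by (simp add: distributed_distr_eq_density)
  have "iexp (t * Z \<omega>) = iexp (t * m) * iexp (t * \<sigma> * ((Z \<omega> - m) / \<sigma>))" for \<omega>
  proof -
    have "iexp (t * Z \<omega>) = iexp (t * m + t * \<sigma> * ((Z \<omega> - m) / \<sigma>))"
      using assms(3) by (simp add: field_simps)
    then show ?thesis
      by (simp add: distrib_left exp_add)
  qed
  then have "(CLINT \<omega>|M. iexp (t * Z \<omega>)) = (CLINT \<omega>|M. iexp (t * m) * iexp (t * \<sigma> * ((Z \<omega> - m) / \<sigma>)))"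
    by simp
  also have "\<dots> = iexp (t * m) * char std_normal_distribution (t * \<sigma>)"
    unfolding char_def std[symmetric] by (subst integral_distr) auto
  finally show ?thesis
    by (simp add: char_std_normal_distribution power_mult_distrib)
qed

lemma normal_distributed_mean_abs_dev:
  assumes "distributed M lborel Z (normal_density m \<sigma>)" and "\<sigma> > 0"
  shows "(\<integral>\<^sup>+ \<omega>. ennreal \<bar>Z \<omega> - m\<bar> \<partial>M) = ennreal (\<sigma> * sqrt (2 / pi))"
proof -
  have "has_bochner_integral lborel (\<lambda>x. normal_density m \<sigma> x * \<bar>x - m\<bar> ^ (2 * 0 + 1))
      (2 ^ 0 * \<sigma> ^ (2 * 0 + 1) * fact 0 * sqrt (2 / pi))"
    by (rule normal_moment_abs_odd) (rule assms(2))
  then have "(\<integral>\<^sup>+ x. ennreal (normal_density m \<sigma> x * \<bar>x - m\<bar>) \<partial>lborel) = ennreal (\<sigma> * sqrt (2 / pi))"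
    by (subst nn_integral_eq_integral) (auto simp: has_bochner_integral_iff)
  moreover have "(\<integral>\<^sup>+ x. ennreal (normal_density m \<sigma> x) * ennreal \<bar>x - m\<bar> \<partial>lborel)
      = (\<integral>\<^sup>+ \<omega>. ennreal \<bar>Z \<omega> - m\<bar> \<partial>M)"
    by (rule distributed_nn_integral[OF assms(1)]) simp
  ultimately show ?thesis
    by (simp add: ennreal_mult'[symmetric])
qed

lemma gaussian_rv_cases:
  assumes "prob_space M" and "gaussian_rv M Z"
  obtains (degenerate) "AE \<omega> in M. Z \<omega> = (\<integral>\<omega>. Z \<omega> \<partial>M)" and "covariance M Z Z = 0"
    | (normal) "covariance M Z Z > 0"
      and "distributed M lborel Z (normal_density (\<integral>\<omega>. Z \<omega> \<partial>M) (sqrt (covariance M Z Z)))"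
proof -
  interpret prob_space M by fact
  have [measurable]: "Z \<in> borel_measurable M"
    using assms(2) by (simp add: gaussian_rv_def)
  consider c where "AE \<omega> in M. Z \<omega> = c"
    | m \<sigma> where "\<sigma> > 0" and "distributed M lborel Z (normal_density m \<sigma>)"
    using assms(2) unfolding gaussian_rv_def by blast
  then show ?thesis
  proof cases
    case (1 c)
    then have mean: "(\<integral>\<omega>. Z \<omega> \<partial>M) = c"
      using integral_cong_AE[of Z M "\<lambda>_. c"] by (simp add: prob_space)
    have "covariance M Z Z = (\<integral>\<omega>. 0 \<partial>M)"
      unfolding covariance_def mean using 1 by (intro integral_cong_AE) auto
    then show ?thesis
      using degenerate 1 mean by simp
  next
    case (2 m \<sigma>)
    have "(\<integral>\<omega>. Z \<omega> \<partial>M) = m"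
      using normal_distributed_expectation[OF 2] .
    moreover have "covariance M Z Z = \<sigma>\<^sup>2"
      using normal_distributed_variance[OF 2] calculation
      by (simp add: covariance_def power2_eq_square)
    ultimately show ?thesis
      using normal 2 by simp
  qed
qed

lemma gaussian_rv_integrable:
  assumes "prob_space M" and "gaussian_rv M Z"
  shows "integrable M Z" and "integrable M (\<lambda>\<omega>. (Z \<omega>)\<^sup>2)"
proof -
  interpret prob_space M by fact
  have [measurable]: "Z \<in> borel_measurable M"
    using assms(2) by (simp add: gaussian_rv_def)
  have "integrable M Z \<and> integrable M (\<lambda>\<omega>. (Z \<omega>)\<^sup>2)"
    using assms
  proof (cases rule: gaussian_rv_cases)
    case degenerate
    define c where "c = (\<integral>\<omega>. Z \<omega> \<partial>M)"
    have AE: "AE \<omega> in M. c = Z \<omega>"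
      using degenerate(1) by (simp add: c_def eq_commute)
    then have AE2: "AE \<omega> in M. c\<^sup>2 = (Z \<omega>)\<^sup>2"
      by eventually_elim simp
    show ?thesis
      using integrable_cong_AE_imp[OF _ _ AE] integrable_cong_AE_imp[OF _ _ AE2] by simp
  next
    case normal
    define m where "m = (\<integral>\<omega>. Z \<omega> \<partial>M)"
    define \<sigma> where "\<sigma> = sqrt (covariance M Z Z)"
    have D: "distributed M lborel Z (normal_density m \<sigma>)" and \<sigma>: "\<sigma> > 0"
      using normal by (simp_all add: m_def \<sigma>_def)
    have Z: "integrable M Z"
      using distributed_integrable[OF D, of "\<lambda>x. x"] integrable_normal_moment_nz_1[OF \<sigma>] by simp
    have "integrable M (\<lambda>\<omega>. (Z \<omega> - m) ^ 2)"
      using distributed_integrable[OF D, of "\<lambda>x. (x - m) ^ 2"] integrable_normal_moment[OF \<sigma>, of m 2]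
      by simp
    moreover have "(\<lambda>\<omega>. (Z \<omega>)\<^sup>2) = (\<lambda>\<omega>. (Z \<omega> - m) ^ 2 + 2 * m * Z \<omega> - m\<^sup>2)"
      by (auto simp: power2_eq_square algebra_simps)
    ultimately show ?thesis
      using Z by simp
  qed
  then show "integrable M Z" and "integrable M (\<lambda>\<omega>. (Z \<omega>)\<^sup>2)"
    by auto
qed

lemma gaussian_rv_char:
  assumes "prob_space M" and "gaussian_rv M Z"
  shows "(CLINT \<omega>|M. iexp (t * Z \<omega>))
    = iexp (t * (\<integral>\<omega>. Z \<omega> \<partial>M)) * complex_of_real (exp (- (t\<^sup>2 * covariance M Z Z) / 2))"
  using assms
proof (cases rule: gaussian_rv_cases)
  case degenerate
  interpret prob_space M by fact
  have [measurable]: "Z \<in> borel_measurable M"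
    using assms(2) by (simp add: gaussian_rv_def)
  have "AE \<omega> in M. iexp (t * Z \<omega>) = iexp (t * (\<integral>\<omega>. Z \<omega> \<partial>M))"
    using degenerate(1) by eventually_elim simp
  then show ?thesis
    using degenerate(2) integral_cong_AE[of "\<lambda>\<omega>. iexp (t * Z \<omega>)" M "\<lambda>_. iexp (t * (\<integral>\<omega>. Z \<omega> \<partial>M))"]
    by (simp add: prob_space)
next
  case normal
  then show ?thesis
    using normal_distributed_char[OF assms(1) normal(2)] by simp
qed

lemma gaussian_rv_mean_abs_dev:
  assumes "prob_space M" and "gaussian_rv M Z"
  shows "(\<integral>\<^sup>+ \<omega>. ennreal \<bar>Z \<omega> - (\<integral>\<omega>. Z \<omega> \<partial>M)\<bar> \<partial>M) = ennreal (sqrt (covariance M Z Z) * sqrt (2 / pi))"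
  using assms
proof (cases rule: gaussian_rv_cases)
  case degenerate
  then show ?thesis
    by (subst nn_integral_cong_AE[where v = "\<lambda>_. 0"]) auto
next
  case normal
  then show ?thesis
    using normal_distributed_mean_abs_dev[OF normal(2)] by simp
qed

lemma gaussian_rv_add_const:
  assumes "prob_space M" and "gaussian_rv M Z"
  shows "gaussian_rv M (\<lambda>\<omega>. Z \<omega> + c)"
proof -
  interpret prob_space M by fact
  have [measurable]: "Z \<in> borel_measurable M"
    using assms(2) by (simp add: gaussian_rv_def)
  have shifted: "(\<lambda>\<omega>. Z \<omega> + c) \<in> borel_measurable M"
    by measurable
  consider d where "AE \<omega> in M. Z \<omega> = d"
    | m \<sigma> where "\<sigma> > 0" and "distributed M lborel Z (normal_density m \<sigma>)"
    using assms(2) unfolding gaussian_rv_def by blast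
  then show ?thesis
  proof cases
    case (1 d)
    then have "AE \<omega> in M. Z \<omega> + c = d + c"
      by eventually_elim simp
    then show ?thesis
      using shifted unfolding gaussian_rv_def by blast
  next
    case (2 m \<sigma>)
    then have "distributed M lborel (\<lambda>\<omega>. c + 1 * Z \<omega>) (normal_density (c + 1 * m) (\<bar>1\<bar> * \<sigma>))"
      by (intro normal_density_affine) auto
    then have "distributed M lborel (\<lambda>\<omega>. Z \<omega> + c) (normal_density (c + m) \<sigma>)"
      by (simp add: add.commute)
    then show ?thesis
      using 2(1) shifted unfolding gaussian_rv_def by blast
  qed
qed

lemma bivariate_normal_gaussian_rv:
  assumes "prob_space M" and "bivariate_normal M X Y"
  shows "gaussian_rv M (\<lambda>\<omega>. a * X \<omega> + b * Y \<omega> + c)"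
  using gaussian_rv_add_const[OF assms(1), of "\<lambda>\<omega>. a * X \<omega> + b * Y \<omega>"] assms(2)
  unfolding bivariate_normal_def by blast

lemma bivariate_normal_linear:
  assumes "bivariate_normal M X Y"
  shows "bivariate_normal M (\<lambda>\<omega>. a * X \<omega> + b * Y \<omega>) (\<lambda>\<omega>. c * X \<omega> + d * Y \<omega>)"
  unfolding bivariate_normal_def
proof (intro allI)
  fix a' b'
  have "gaussian_rv M (\<lambda>\<omega>. (a' * a + b' * c) * X \<omega> + (a' * b + b' * d) * Y \<omega>)"
    using assms unfolding bivariate_normal_def by blast
  moreover have "(\<lambda>\<omega>. (a' * a + b' * c) * X \<omega> + (a' * b + b' * d) * Y \<omega>)
      = (\<lambda>\<omega>. a' * (a * X \<omega> + b * Y \<omega>) + b' * (c * X \<omega> + d * Y \<omega>))"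
    by (simp add: algebra_simps)
  ultimately show "gaussian_rv M (\<lambda>\<omega>. a' * (a * X \<omega> + b * Y \<omega>) + b' * (c * X \<omega> + d * Y \<omega>))"
    by simp
qed

lemma bivariate_normal_commute:
  assumes "bivariate_normal M X Y"
  shows "bivariate_normal M Y X"
  using bivariate_normal_linear[OF assms, of 0 1 1 0] by simp

lemma gaussian_rv_distr_eq:
  assumes "prob_space M" and "gaussian_rv M Z" and "gaussian_rv M Z'"
    and "(\<integral>\<omega>. Z' \<omega> \<partial>M) = (\<integral>\<omega>. Z \<omega> \<partial>M)" and "covariance M Z' Z' = covariance M Z Z"
    and "covariance M Z Z > 0"
  shows "distr M borel Z' = distr M borel Z"
proof -
  have "distributed M lborel Z (normal_density (\<integral>\<omega>. Z \<omega> \<partial>M) (sqrt (covariance M Z Z)))"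
    using assms(1,2) by (cases rule: gaussian_rv_cases) (use assms(6) in auto)
  moreover have "distributed M lborel Z' (normal_density (\<integral>\<omega>. Z \<omega> \<partial>M) (sqrt (covariance M Z Z)))"
    using assms(1,3) by (cases rule: gaussian_rv_cases) (use assms(4-6) in auto)
  ultimately have "distr M lborel Z' = distr M lborel Z"
    by (simp add: distributed_distr_eq_density)
  moreover have "distr M lborel f = distr M borel f" for f :: "'a \<Rightarrow> real"
    by (rule distr_cong) auto
  ultimately show ?thesis
    by simp
qed

lemma covariance_commute: "covariance M X Y = covariance M Y X"
  by (simp add: covariance_def mult.commute)

lemma covariance_self_nonneg: "0 \<le> covariance M X X"
  unfolding covariance_def by (intro integral_nonneg_AE) simp

lemma integrable_mult_of_square_integrable:
  fixes f g :: "'a \<Rightarrow> real"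
  assumes [measurable]: "f \<in> borel_measurable M" "g \<in> borel_measurable M"
    and "integrable M (\<lambda>x. (f x)\<^sup>2)" and "integrable M (\<lambda>x. (g x)\<^sup>2)"
  shows "integrable M (\<lambda>x. f x * g x)"
proof (rule Bochner_Integration.integrable_bound)
  show "integrable M (\<lambda>x. (f x)\<^sup>2 + (g x)\<^sup>2)"
    using assms(3,4) by simp
  have "\<bar>f x * g x\<bar> \<le> (f x)\<^sup>2 + (g x)\<^sup>2" for x
  proof -
    have "2 * (\<bar>f x\<bar> * \<bar>g x\<bar>) \<le> (f x)\<^sup>2 + (g x)\<^sup>2"
      using sum_squares_bound[of "\<bar>f x\<bar>" "\<bar>g x\<bar>"] by (simp add: mult.assoc)
    moreover have "0 \<le> \<bar>f x\<bar> * \<bar>g x\<bar>"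
      by simp
    ultimately show ?thesis
      unfolding abs_mult by linarith
  qed
  then show "AE x in M. norm (f x * g x) \<le> norm ((f x)\<^sup>2 + (g x)\<^sup>2)"
    by simp
qed simp

lemma covariance_affine_combination:
  fixes X Y :: "'a \<Rightarrow> real"
  assumes "prob_space M" and "integrable M X" and "integrable M Y"
    and "integrable M (\<lambda>\<omega>. (X \<omega>)\<^sup>2)" and "integrable M (\<lambda>\<omega>. (Y \<omega>)\<^sup>2)"
  shows "covariance M (\<lambda>\<omega>. a * X \<omega> + b * Y \<omega> + c) (\<lambda>\<omega>. a' * X \<omega> + b' * Y \<omega> + c')
    = a * a' * covariance M X X + (a * b' + a' * b) * covariance M X Y + b * b' * covariance M Y Y"
proof -
  interpret prob_space M by fact
  have [measurable]: "X \<in> borel_measurable M" "Y \<in> borel_measurable M"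
    using assms(2,3) by auto
  define X\<^sub>0 where "X\<^sub>0 \<omega> = X \<omega> - (\<integral>\<omega>. X \<omega> \<partial>M)" for \<omega>
  define Y\<^sub>0 where "Y\<^sub>0 \<omega> = Y \<omega> - (\<integral>\<omega>. Y \<omega> \<partial>M)" for \<omega>
  have [measurable]: "X\<^sub>0 \<in> borel_measurable M" "Y\<^sub>0 \<in> borel_measurable M"
    unfolding X\<^sub>0_def Y\<^sub>0_def by measurable
  have "integrable M (\<lambda>\<omega>. (X\<^sub>0 \<omega>)\<^sup>2)" "integrable M (\<lambda>\<omega>. (Y\<^sub>0 \<omega>)\<^sup>2)"
    using assms(2-5) by (simp_all add: X\<^sub>0_def Y\<^sub>0_def power2_diff)
  then have products: "integrable M (\<lambda>\<omega>. X\<^sub>0 \<omega> * X\<^sub>0 \<omega>)" "integrable M (\<lambda>\<omega>. X\<^sub>0 \<omega> * Y\<^sub>0 \<omega>)"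
    "integrable M (\<lambda>\<omega>. Y\<^sub>0 \<omega> * Y\<^sub>0 \<omega>)"
    by (auto intro: integrable_mult_of_square_integrable)
  have "(\<integral>\<omega>. a * X \<omega> + b * Y \<omega> + c \<partial>M)
      = a * (\<integral>\<omega>. X \<omega> \<partial>M) + b * (\<integral>\<omega>. Y \<omega> \<partial>M) + c"
    "(\<integral>\<omega>. a' * X \<omega> + b' * Y \<omega> + c' \<partial>M)
      = a' * (\<integral>\<omega>. X \<omega> \<partial>M) + b' * (\<integral>\<omega>. Y \<omega> \<partial>M) + c'"
    using assms(2,3) by (simp_all add: prob_space)
  then have "covariance M (\<lambda>\<omega>. a * X \<omega> + b * Y \<omega> + c) (\<lambda>\<omega>. a' * X \<omega> + b' * Y \<omega> + c')
      = (\<integral>\<omega>. a * a' * (X\<^sub>0 \<omega> * X\<^sub>0 \<omega>) + (a * b' + a' * b) * (X\<^sub>0 \<omega> * Y\<^sub>0 \<omega>)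
          + b * b' * (Y\<^sub>0 \<omega> * Y\<^sub>0 \<omega>) \<partial>M)"
    unfolding covariance_def
    by (intro Bochner_Integration.integral_cong) (simp_all add: X\<^sub>0_def Y\<^sub>0_def algebra_simps)
  also have "\<dots> = a * a' * covariance M X X + (a * b' + a' * b) * covariance M X Y + b * b' * covariance M Y Y"
    using products by (simp add: covariance_def X\<^sub>0_def[symmetric] Y\<^sub>0_def[symmetric])
  finally show ?thesis .
qed

lemma covariance_Cauchy_Schwarz:
  fixes X Y :: "'a \<Rightarrow> real"
  assumes "prob_space M" and "integrable M X" and "integrable M Y"
    and "integrable M (\<lambda>\<omega>. (X \<omega>)\<^sup>2)" and "integrable M (\<lambda>\<omega>. (Y \<omega>)\<^sup>2)"
    and "covariance M X X > 0"
  shows "(covariance M X Y)\<^sup>2 \<le> covariance M X X * covariance M Y Y"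
proof -
  define \<beta> where "\<beta> = covariance M X Y / covariance M X X"
  have "0 \<le> covariance M (\<lambda>\<omega>. - \<beta> * X \<omega> + 1 * Y \<omega> + 0) (\<lambda>\<omega>. - \<beta> * X \<omega> + 1 * Y \<omega> + 0)"
    by (rule covariance_self_nonneg)
  also have "\<dots> = covariance M Y Y - (covariance M X Y)\<^sup>2 / covariance M X X"
    unfolding covariance_affine_combination[OF assms(1-5)] \<beta>_def
    using assms(6) by (simp add: field_simps power2_eq_square)
  finally show ?thesis
    using assms(6) by (simp add: field_simps mult.commute)
qed

section \<open>Independence from factorising characteristic functions\<close>

lemma distr_density_eq_of_char_eq:
  fixes R g :: "'a \<Rightarrow> real"
  assumes "prob_space M" and [measurable]: "R \<in> borel_measurable M" "g \<in> borel_measurable M"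
    and "integrable M g" and "\<And>\<omega>. 0 \<le> g \<omega>" and "(\<integral>\<omega>. g \<omega> \<partial>M) = 1"
    and "\<And>t. (CLINT \<omega>|M. g \<omega> *\<^sub>R iexp (t * R \<omega>)) = (CLINT \<omega>|M. iexp (t * R \<omega>))"
  shows "distr (density M g) borel R = distr M borel R"
proof -
  interpret prob_space M by fact
  define Q where "Q = density M g"
  have "emeasure Q (space Q) = (\<integral>\<^sup>+ \<omega>. ennreal (g \<omega>) * indicator (space M) \<omega> \<partial>M)"
    unfolding Q_def by (simp add: emeasure_density)
  also have "\<dots> = ennreal (\<integral>\<omega>. g \<omega> \<partial>M)"
    using assms(4,5) by (subst nn_integral_eq_integral[symmetric]) (auto intro!: nn_integral_cong)
  finally have "prob_space Q"
    using assms(6) by (intro prob_spaceI) simp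
  then interpret Q: prob_space Q .
  have [measurable_cong]: "sets Q = sets M"
    by (simp add: Q_def)
  have "char (distr Q borel R) t = char (distr M borel R) t" for t
  proof -
    have "char (distr Q borel R) t = (CLINT \<omega>|Q. iexp (t * R \<omega>))"
      unfolding char_def by (subst integral_distr) auto
    also have "\<dots> = (CLINT \<omega>|M. g \<omega> *\<^sub>R iexp (t * R \<omega>))"
      unfolding Q_def using assms(5) by (subst integral_density) auto
    also have "\<dots> = char (distr M borel R) t"
      unfolding char_def assms(7) by (subst integral_distr) auto
    finally show ?thesis .
  qed
  then show ?thesis
    unfolding Q_def[symmetric]
    by (intro Levy_uniqueness Q.real_distribution_distr real_distribution_distr) auto
qed

lemma integral_indicator_density_eq_of_char_eq:
  fixes R g :: "'a \<Rightarrow> real"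
  assumes "prob_space M" and [measurable]: "R \<in> borel_measurable M" "g \<in> borel_measurable M"
    and "integrable M g" and "\<And>\<omega>. 0 \<le> g \<omega>" and "(\<integral>\<omega>. g \<omega> \<partial>M) = 1"
    and "\<And>t. (CLINT \<omega>|M. g \<omega> *\<^sub>R iexp (t * R \<omega>)) = (CLINT \<omega>|M. iexp (t * R \<omega>))"
    and [measurable]: "B \<in> sets borel"
  shows "(\<integral>\<omega>. g \<omega> * indicator B (R \<omega>) \<partial>M) = (\<integral>\<omega>. indicator B (R \<omega>) \<partial>M)"
proof -
  have [measurable_cong]: "sets (density M g) = sets M"
    by simp
  have "(\<integral>\<omega>. g \<omega> * indicator B (R \<omega>) \<partial>M) = (\<integral>\<omega>. indicator B (R \<omega>) \<partial>density M g)"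
    using assms(5) by (subst integral_density) auto
  also have "\<dots> = (\<integral>x. indicator B x \<partial>distr (density M g) borel R)"
    by (rule integral_distr[symmetric]) auto
  also have "\<dots> = (\<integral>x. indicator B x \<partial>distr M borel R)"
    by (simp add: distr_density_eq_of_char_eq[OF assms(1-7)])
  also have "\<dots> = (\<integral>\<omega>. indicator B (R \<omega>) \<partial>M)"
    by (rule integral_distr) auto
  finally show ?thesis .
qed

lemma indicator_uncorrelated_of_iexp_uncorrelated:
  fixes R h :: "'a \<Rightarrow> real"
  assumes "prob_space M" and [measurable]: "R \<in> borel_measurable M" "h \<in> borel_measurable M"
    and "\<And>\<omega>. \<bar>h \<omega>\<bar> \<le> 1"
    and uncorrelated: "\<And>t. (CLINT \<omega>|M. iexp (t * R \<omega>) * complex_of_real (h \<omega>))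
      = (CLINT \<omega>|M. iexp (t * R \<omega>)) * complex_of_real (\<integral>\<omega>. h \<omega> \<partial>M)"
    and [measurable]: "B \<in> sets borel"
  shows "(\<integral>\<omega>. indicator B (R \<omega>) * h \<omega> \<partial>M) = (\<integral>\<omega>. indicator B (R \<omega>) \<partial>M) * (\<integral>\<omega>. h \<omega> \<partial>M)"
proof -
  interpret prob_space M by fact
  have h: "integrable M h"
    using assms(4) by (intro integrable_const_bound[where B = 1]) auto
  have iexp: "integrable M (\<lambda>\<omega>. iexp (t * R \<omega>))" for t
    by (intro integrable_const_bound[where B = 1]) (auto simp: norm_exp_i_times)
  have iexp_h: "integrable M (\<lambda>\<omega>. iexp (t * R \<omega>) * complex_of_real (h \<omega>))" for t
    using assms(4) by (intro integrable_const_bound[where B = 1]) (auto simp: norm_mult norm_exp_i_times)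
  have ind: "integrable M (\<lambda>\<omega>. indicator B (R \<omega>) :: real)"
    by (intro integrable_const_bound[where B = 1]) (auto simp: indicator_def)
  have ind_h: "integrable M (\<lambda>\<omega>. indicator B (R \<omega>) * h \<omega>)"
    using assms(4) by (intro integrable_const_bound[where B = 1]) (auto simp: indicator_def)
  have h_ge: "-1 \<le> h \<omega>" for \<omega>
    using assms(4)[of \<omega>] by linarith
  define c where "c = 2 + (\<integral>\<omega>. h \<omega> \<partial>M)"
  have "-1 \<le> (\<integral>\<omega>. h \<omega> \<partial>M)"
    using integral_mono[OF _ h h_ge] by (simp add: prob_space)
  then have c: "c \<ge> 1"
    by (simp add: c_def)
  define g where "g = (\<lambda>\<omega>. (2 + h \<omega>) / c)"
  \<comment> \<open>Reweighting \<open>M\<close> by \<open>g\<close> leaves the characteristic function, hence the law, of \<open>R\<close> unchanged.\<close>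
  have "(\<integral>\<omega>. g \<omega> * indicator B (R \<omega>) \<partial>M) = (\<integral>\<omega>. indicator B (R \<omega>) \<partial>M)"
  proof (rule integral_indicator_density_eq_of_char_eq)
    show "integrable M g" "(\<integral>\<omega>. g \<omega> \<partial>M) = 1"
      using h c by (simp_all add: g_def c_def prob_space)
    show "0 \<le> g \<omega>" for \<omega>
      using h_ge[of \<omega>] c by (simp add: g_def)
    show "(CLINT \<omega>|M. g \<omega> *\<^sub>R iexp (t * R \<omega>)) = (CLINT \<omega>|M. iexp (t * R \<omega>))" for t
    proof -
      have "(CLINT \<omega>|M. g \<omega> *\<^sub>R iexp (t * R \<omega>))
          = (CLINT \<omega>|M. complex_of_real (1 / c) * (2 * iexp (t * R \<omega>) + iexp (t * R \<omega>) * complex_of_real (h \<omega>)))"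
        by (intro Bochner_Integration.integral_cong) (auto simp: g_def scaleR_conv_of_real field_simps)
      also have "\<dots> = complex_of_real (1 / c) * (2 * (CLINT \<omega>|M. iexp (t * R \<omega>))
          + (CLINT \<omega>|M. iexp (t * R \<omega>) * complex_of_real (h \<omega>)))"
        using iexp iexp_h by simp
      also have "\<dots> = (CLINT \<omega>|M. iexp (t * R \<omega>)) * complex_of_real ((2 + (\<integral>\<omega>. h \<omega> \<partial>M)) / c)"
        unfolding uncorrelated by (simp add: field_simps)
      finally show ?thesis
        using c by (simp add: c_def)
    qed
  qed (use assms(1) h in \<open>simp_all add: g_def\<close>)
  moreover have "(\<integral>\<omega>. g \<omega> * indicator B (R \<omega>) \<partial>M)
      = (2 * (\<integral>\<omega>. indicator B (R \<omega>) \<partial>M) + (\<integral>\<omega>. indicator B (R \<omega>) * h \<omega> \<partial>M)) / c"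
    using ind ind_h by (simp add: g_def field_simps)
  ultimately show ?thesis
    using c by (simp add: c_def field_simps)
qed

lemma of_real_cos_iexp: "complex_of_real (cos x) = (iexp x + iexp (- x)) / 2"
  by (simp add: cos_exp_eq flip: cos_of_real)

lemma of_real_sin_iexp: "complex_of_real (sin x) = (iexp x - iexp (- x)) / (2 * \<i>)"
  by (simp add: sin_exp_eq flip: sin_of_real)

lemma iexp_trig_uncorrelated_of_char_factorization:
  fixes X R :: "'a \<Rightarrow> real"
  assumes "prob_space M" and [measurable]: "X \<in> borel_measurable M" "R \<in> borel_measurable M"
    and factorization: "\<And>s t. (CLINT \<omega>|M. iexp (s * X \<omega> + t * R \<omega>))
      = (CLINT \<omega>|M. iexp (s * X \<omega>)) * (CLINT \<omega>|M. iexp (t * R \<omega>))"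
  shows "(CLINT \<omega>|M. iexp (t * R \<omega>) * complex_of_real (cos (s * X \<omega>)))
      = (CLINT \<omega>|M. iexp (t * R \<omega>)) * complex_of_real (\<integral>\<omega>. cos (s * X \<omega>) \<partial>M)"
    and "(CLINT \<omega>|M. iexp (t * R \<omega>) * complex_of_real (sin (s * X \<omega>)))
      = (CLINT \<omega>|M. iexp (t * R \<omega>)) * complex_of_real (\<integral>\<omega>. sin (s * X \<omega>) \<partial>M)"
proof -
  interpret prob_space M by fact
  have iexp: "integrable M (\<lambda>\<omega>. iexp (f \<omega>))" if [measurable]: "f \<in> borel_measurable M" for f
    by (intro integrable_const_bound[where B = 1]) (auto simp: norm_exp_i_times)
  define u where "u = (CLINT \<omega>|M. iexp (s * X \<omega>))"
  define v where "v = (CLINT \<omega>|M. iexp (- s * X \<omega>))"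
  have mean_cos: "complex_of_real (\<integral>\<omega>. cos (s * X \<omega>) \<partial>M) = (u + v) / 2"
    using iexp[of "\<lambda>\<omega>. s * X \<omega>"] iexp[of "\<lambda>\<omega>. - s * X \<omega>"]
    by (simp add: u_def v_def of_real_cos_iexp flip: integral_complex_of_real)
  have mean_sin: "complex_of_real (\<integral>\<omega>. sin (s * X \<omega>) \<partial>M) = (u - v) / (2 * \<i>)"
    using iexp[of "\<lambda>\<omega>. s * X \<omega>"] iexp[of "\<lambda>\<omega>. - s * X \<omega>"]
    by (simp add: u_def v_def of_real_sin_iexp diff_divide_distrib flip: integral_complex_of_real)
  have expand: "iexp (t * R \<omega>) * complex_of_real (cos (s * X \<omega>))
      = (iexp (s * X \<omega> + t * R \<omega>) + iexp (- s * X \<omega> + t * R \<omega>)) / 2"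
    "iexp (t * R \<omega>) * complex_of_real (sin (s * X \<omega>))
      = (iexp (s * X \<omega> + t * R \<omega>) - iexp (- s * X \<omega> + t * R \<omega>)) / (2 * \<i>)" for t \<omega>
    by (simp_all add: of_real_cos_iexp of_real_sin_iexp field_simps flip: exp_add)
  show "(CLINT \<omega>|M. iexp (t * R \<omega>) * complex_of_real (cos (s * X \<omega>)))
      = (CLINT \<omega>|M. iexp (t * R \<omega>)) * complex_of_real (\<integral>\<omega>. cos (s * X \<omega>) \<partial>M)"
  proof -
    have "(CLINT \<omega>|M. iexp (t * R \<omega>) * complex_of_real (cos (s * X \<omega>)))
        = ((CLINT \<omega>|M. iexp (s * X \<omega> + t * R \<omega>)) + (CLINT \<omega>|M. iexp (- s * X \<omega> + t * R \<omega>))) / 2"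
      unfolding expand using iexp[of "\<lambda>\<omega>. s * X \<omega> + t * R \<omega>"] iexp[of "\<lambda>\<omega>. - s * X \<omega> + t * R \<omega>"]
      by simp
    then show ?thesis
      unfolding factorization mean_cos u_def v_def by (simp add: algebra_simps)
  qed
  show "(CLINT \<omega>|M. iexp (t * R \<omega>) * complex_of_real (sin (s * X \<omega>)))
      = (CLINT \<omega>|M. iexp (t * R \<omega>)) * complex_of_real (\<integral>\<omega>. sin (s * X \<omega>) \<partial>M)"
  proof -
    have "(CLINT \<omega>|M. iexp (t * R \<omega>) * complex_of_real (sin (s * X \<omega>)))
        = ((CLINT \<omega>|M. iexp (s * X \<omega> + t * R \<omega>)) - (CLINT \<omega>|M. iexp (- s * X \<omega> + t * R \<omega>))) / (2 * \<i>)"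
      unfolding expand using iexp[of "\<lambda>\<omega>. s * X \<omega> + t * R \<omega>"] iexp[of "\<lambda>\<omega>. - s * X \<omega> + t * R \<omega>"]
      by simp
    then show ?thesis
      unfolding factorization mean_sin u_def v_def by (simp add: algebra_simps diff_divide_distrib)
  qed
qed

lemma iexp_indicator_uncorrelated_of_char_factorization:
  fixes X R :: "'a \<Rightarrow> real"
  assumes "prob_space M" and [measurable]: "X \<in> borel_measurable M" "R \<in> borel_measurable M"
    and factorization: "\<And>s t. (CLINT \<omega>|M. iexp (s * X \<omega> + t * R \<omega>))
      = (CLINT \<omega>|M. iexp (s * X \<omega>)) * (CLINT \<omega>|M. iexp (t * R \<omega>))"
    and [measurable]: "B \<in> sets borel"
  shows "(CLINT \<omega>|M. iexp (s * X \<omega>) * complex_of_real (indicator B (R \<omega>)))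
    = (CLINT \<omega>|M. iexp (s * X \<omega>)) * complex_of_real (\<integral>\<omega>. indicator B (R \<omega>) \<partial>M)"
proof -
  interpret prob_space M by fact
  have indicator_cos: "(\<integral>\<omega>. indicator B (R \<omega>) * cos (s * X \<omega>) \<partial>M)
      = (\<integral>\<omega>. indicator B (R \<omega>) \<partial>M) * (\<integral>\<omega>. cos (s * X \<omega>) \<partial>M)"
    by (rule indicator_uncorrelated_of_iexp_uncorrelated[OF assms(1) _ _ _
          iexp_trig_uncorrelated_of_char_factorization(1)[OF assms(1-4)]]) auto
  have indicator_sin: "(\<integral>\<omega>. indicator B (R \<omega>) * sin (s * X \<omega>) \<partial>M)
      = (\<integral>\<omega>. indicator B (R \<omega>) \<partial>M) * (\<integral>\<omega>. sin (s * X \<omega>) \<partial>M)"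
    by (rule indicator_uncorrelated_of_iexp_uncorrelated[OF assms(1) _ _ _
          iexp_trig_uncorrelated_of_char_factorization(2)[OF assms(1-4)]]) auto
  have parts: "integrable M (\<lambda>\<omega>. indicator B (R \<omega>) * cos (s * X \<omega>))"
    "integrable M (\<lambda>\<omega>. indicator B (R \<omega>) * sin (s * X \<omega>))"
    and trig: "integrable M (\<lambda>\<omega>. cos (s * X \<omega>))" "integrable M (\<lambda>\<omega>. sin (s * X \<omega>))"
    by (auto intro!: integrable_const_bound[where B = 1] simp: indicator_def)
  have euler: "iexp x = complex_of_real (cos x) + \<i> * complex_of_real (sin x)" for x
    by (simp add: cos_of_real exp_Euler sin_of_real)
  have "(CLINT \<omega>|M. iexp (s * X \<omega>) * complex_of_real (indicator B (R \<omega>)))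
      = (CLINT \<omega>|M. complex_of_real (indicator B (R \<omega>) * cos (s * X \<omega>))
          + \<i> * complex_of_real (indicator B (R \<omega>) * sin (s * X \<omega>)))"
    by (intro Bochner_Integration.integral_cong refl) (subst euler, simp add: algebra_simps)
  also have "\<dots> = complex_of_real (\<integral>\<omega>. indicator B (R \<omega>) * cos (s * X \<omega>) \<partial>M)
        + \<i> * complex_of_real (\<integral>\<omega>. indicator B (R \<omega>) * sin (s * X \<omega>) \<partial>M)"
    using parts
    by (subst Bochner_Integration.integral_add) (auto intro!: integrable_of_real simp del: of_real_mult)
  also have "\<dots> = complex_of_real (\<integral>\<omega>. indicator B (R \<omega>) \<partial>M)
      * (complex_of_real (\<integral>\<omega>. cos (s * X \<omega>) \<partial>M) + \<i> * complex_of_real (\<integral>\<omega>. sin (s * X \<omega>) \<partial>M))"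
    unfolding indicator_cos indicator_sin of_real_mult by (simp add: algebra_simps)
  also have "complex_of_real (\<integral>\<omega>. cos (s * X \<omega>) \<partial>M) + \<i> * complex_of_real (\<integral>\<omega>. sin (s * X \<omega>) \<partial>M)
      = (CLINT \<omega>|M. complex_of_real (cos (s * X \<omega>)) + \<i> * complex_of_real (sin (s * X \<omega>)))"
    using trig
    by (subst Bochner_Integration.integral_add) (auto intro!: integrable_of_real simp del: of_real_mult)
  also have "\<dots> = (CLINT \<omega>|M. iexp (s * X \<omega>))"
    by (simp only: euler)
  finally show ?thesis
    by (simp add: mult.commute)
qed

lemma indep_var_of_char_factorization:
  fixes X R :: "'a \<Rightarrow> real"
  assumes "prob_space M" and [measurable]: "X \<in> borel_measurable M" "R \<in> borel_measurable M"
    and factorization: "\<And>s t. (CLINT \<omega>|M. iexp (s * X \<omega> + t * R \<omega>))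
      = (CLINT \<omega>|M. iexp (s * X \<omega>)) * (CLINT \<omega>|M. iexp (t * R \<omega>))"
  shows "prob_space.indep_var M borel X borel R"
proof -
  interpret prob_space M by fact
  have rectangle: "measure M ((\<lambda>\<omega>. (X \<omega>, R \<omega>)) -` (A \<times> B) \<inter> space M)
      = measure M (X -` A \<inter> space M) * measure M (R -` B \<inter> space M)"
    if [measurable]: "A \<in> sets borel" "B \<in> sets borel" for A B
  proof -
    have "(\<integral>\<omega>. indicator A (X \<omega>) * indicator B (R \<omega>) \<partial>M)
        = (\<integral>\<omega>. indicator A (X \<omega>) \<partial>M) * (\<integral>\<omega>. indicator B (R \<omega>) \<partial>M :: real)"
      by (rule indicator_uncorrelated_of_iexp_uncorrelated[OF assms(1) _ _ _
            iexp_indicator_uncorrelated_of_char_factorization[OF assms(1-3) factorization]])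
        (auto simp: indicator_def)
    moreover have "(\<integral>\<omega>. indicator A (X \<omega>) * indicator B (R \<omega>) \<partial>M)
        = (\<integral>\<omega>. indicator ((\<lambda>\<omega>. (X \<omega>, R \<omega>)) -` (A \<times> B) \<inter> space M) \<omega> \<partial>M :: real)"
      "(\<integral>\<omega>. indicator A (X \<omega>) \<partial>M) = (\<integral>\<omega>. indicator (X -` A \<inter> space M) \<omega> \<partial>M :: real)"
      "(\<integral>\<omega>. indicator B (R \<omega>) \<partial>M) = (\<integral>\<omega>. indicator (R -` B \<inter> space M) \<omega> \<partial>M :: real)"
      by (auto intro!: Bochner_Integration.integral_cong simp: indicator_def)
    ultimately show ?thesis
      by (simp add: Int_assoc)
  qed
  have "distr M borel X \<Otimes>\<^sub>M distr M borel R = distr M (borel \<Otimes>\<^sub>M borel) (\<lambda>\<omega>. (X \<omega>, R \<omega>))"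
  proof (rule pair_measure_eqI)
    show "sigma_finite_measure (distr M borel X)" "sigma_finite_measure (distr M borel R)"
      by (auto intro!: prob_space_imp_sigma_finite prob_space_distr)
    fix A B assume "A \<in> sets (distr M borel X)" "B \<in> sets (distr M borel R)"
    then have [measurable]: "A \<in> sets borel" "B \<in> sets borel"
      by auto
    show "emeasure (distr M borel X) A * emeasure (distr M borel R) B
        = emeasure (distr M (borel \<Otimes>\<^sub>M borel) (\<lambda>\<omega>. (X \<omega>, R \<omega>))) (A \<times> B)"
      by (simp add: emeasure_distr emeasure_eq_measure rectangle ennreal_mult)
  qed simp
  then show ?thesis
    by (subst indep_var_distribution_eq) simp
qed

lemma indep_var_of_bivariate_normal_uncorrelated:
  assumes "prob_space M" and "bivariate_normal M X R" and "covariance M X R = 0"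
  shows "prob_space.indep_var M borel X borel R"
proof -
  interpret prob_space M by fact
  have X: "gaussian_rv M X" and R: "gaussian_rv M R"
    using bivariate_normal_gaussian_rv[OF assms(1,2), of 1 0 0] bivariate_normal_gaussian_rv[OF assms(1,2), of 0 1 0]
    by simp_all
  then have [measurable]: "X \<in> borel_measurable M" "R \<in> borel_measurable M"
    by (simp_all add: gaussian_rv_def)
  note integrable = gaussian_rv_integrable[OF assms(1) X] gaussian_rv_integrable[OF assms(1) R]
  show ?thesis
  proof (rule indep_var_of_char_factorization[OF assms(1)])
    fix s t :: real
    let ?Z = "\<lambda>\<omega>. s * X \<omega> + t * R \<omega> + 0"
    have "(\<integral>\<omega>. ?Z \<omega> \<partial>M) = s * (\<integral>\<omega>. X \<omega> \<partial>M) + t * (\<integral>\<omega>. R \<omega> \<partial>M)"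
      using integrable by (simp add: prob_space)
    moreover have "covariance M ?Z ?Z = s\<^sup>2 * covariance M X X + t\<^sup>2 * covariance M R R"
      using covariance_affine_combination[OF assms(1) integrable(1,3,2,4),
          where a = s and b = t and c = 0 and a' = s and b' = t and c' = 0] assms(3)
      by (simp add: power2_eq_square)
    ultimately have "(CLINT \<omega>|M. iexp (s * X \<omega> + t * R \<omega>))
        = iexp (s * (\<integral>\<omega>. X \<omega> \<partial>M) + t * (\<integral>\<omega>. R \<omega> \<partial>M))
          * complex_of_real (exp (- (s\<^sup>2 * covariance M X X) / 2 + - (t\<^sup>2 * covariance M R R) / 2))"
      using gaussian_rv_char[OF assms(1) bivariate_normal_gaussian_rv[OF assms(1,2)], of 1 s t 0]
      by (simp add: add_divide_distrib)
    also have "\<dots> = (iexp (s * (\<integral>\<omega>. X \<omega> \<partial>M)) * complex_of_real (exp (- (s\<^sup>2 * covariance M X X) / 2)))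
        * (iexp (t * (\<integral>\<omega>. R \<omega> \<partial>M)) * complex_of_real (exp (- (t\<^sup>2 * covariance M R R) / 2)))"
      by (simp only: of_real_add distrib_left exp_add of_real_mult) (simp add: mult_ac)
    finally show "(CLINT \<omega>|M. iexp (s * X \<omega> + t * R \<omega>))
        = (CLINT \<omega>|M. iexp (s * X \<omega>)) * (CLINT \<omega>|M. iexp (t * R \<omega>))"
      by (simp only: gaussian_rv_char[OF assms(1) X] gaussian_rv_char[OF assms(1) R])
  qed measurable
qed

section \<open>Couplings and the earth mover's covariance\<close>

lemma measurable_fst_borel [measurable]:
  "fst \<in> borel_measurable (borel :: ('a::second_countable_topology \<times> 'b::second_countable_topology) measure)"
  by (metis borel_prod measurable_fst)

lemma measurable_snd_borel [measurable]:
  "snd \<in> borel_measurable (borel :: ('a::second_countable_topology \<times> 'b::second_countable_topology) measure)"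
  by (metis borel_prod measurable_snd)

lemma eCov_le_coupling:
  fixes A B U V :: "'b \<Rightarrow> real" and X Y :: "'a \<Rightarrow> real"
  assumes "prob_space N"
    and [measurable]: "A \<in> borel_measurable N" "B \<in> borel_measurable N"
      "U \<in> borel_measurable N" "V \<in> borel_measurable N"
    and "distr N borel (\<lambda>z. (A z, B z)) = distr M borel (\<lambda>\<omega>. (X \<omega>, Y \<omega>))"
    and "distr N borel (\<lambda>z. (U z, V z)) = distr M borel X \<Otimes>\<^sub>M distr M borel Y"
  shows "eCov M X Y \<le> (\<integral>\<^sup>+ z. ennreal (\<bar>A z - U z\<bar> + \<bar>B z - V z\<bar>) \<partial>N)"
proof -
  define F where "F z = ((A z, B z), (U z, V z))" for z
  have [measurable]: "F \<in> borel_measurable N"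
    unfolding F_def by measurable
  have "distr N borel F \<in> couplings (distr M borel (\<lambda>\<omega>. (X \<omega>, Y \<omega>))) (distr M borel X \<Otimes>\<^sub>M distr M borel Y)"
    unfolding couplings_def
  proof (intro CollectI conjI)
    show "prob_space (distr N borel F)"
      by (rule prob_space.prob_space_distr[OF assms(1)]) simp
    show "distr (distr N borel F) borel fst = distr M borel (\<lambda>\<omega>. (X \<omega>, Y \<omega>))"
      using assms(6) by (subst distr_distr) (auto simp: comp_def F_def)
    show "distr (distr N borel F) borel snd = distr M borel X \<Otimes>\<^sub>M distr M borel Y"
      using assms(7) by (subst distr_distr) (auto simp: comp_def F_def)
  qed simp
  then have "eCov M X Y \<le> (\<integral>\<^sup>+ z. ennreal (manhattan (fst z) (snd z)) \<partial>distr N borel F)"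
    unfolding eCov_def emd_def by (rule INF_lower)
  also have "\<dots> = (\<integral>\<^sup>+ z. ennreal (\<bar>A z - U z\<bar> + \<bar>B z - V z\<bar>) \<partial>N)"
    by (subst nn_integral_distr) (auto simp: manhattan_def F_def)
  finally show ?thesis .
qed

lemma eCov_le_indep_copy:
  fixes X Y X' Y' :: "'a \<Rightarrow> real"
  assumes "prob_space M"
    and [measurable]: "X \<in> borel_measurable M" "Y \<in> borel_measurable M"
      "X' \<in> borel_measurable M" "Y' \<in> borel_measurable M"
    and "prob_space.indep_var M borel X' borel Y'"
    and "distr M borel X' = distr M borel X" and "distr M borel Y' = distr M borel Y"
  shows "eCov M X Y \<le> (\<integral>\<^sup>+ \<omega>. ennreal (\<bar>X \<omega> - X' \<omega>\<bar> + \<bar>Y \<omega> - Y' \<omega>\<bar>) \<partial>M)"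
proof (rule eCov_le_coupling[OF assms(1-5) refl])
  show "distr M borel (\<lambda>\<omega>. (X' \<omega>, Y' \<omega>)) = distr M borel X \<Otimes>\<^sub>M distr M borel Y"
    using assms(6-8) by (simp add: prob_space.indep_var_distribution_eq[OF assms(1)] borel_prod)
qed

lemma distr_pair_measure_comp_fst:
  fixes f :: "'a \<Rightarrow> 'c::second_countable_topology"
  assumes "prob_space N" and [measurable]: "f \<in> borel_measurable M"
  shows "distr (M \<Otimes>\<^sub>M N) borel (\<lambda>z. f (fst z)) = distr M borel f"
proof -
  interpret prob_space N by fact
  have "distr (M \<Otimes>\<^sub>M N) borel (\<lambda>z. f (fst z)) = distr (distr (M \<Otimes>\<^sub>M N) M fst) borel f"
    by (subst distr_distr) (auto simp: comp_def)
  then show ?thesis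
    by (simp add: distr_pair_fst)
qed

lemma distr_pair_measure_comp_snd:
  fixes f :: "'a \<Rightarrow> 'c::second_countable_topology"
  assumes "prob_space M" and "prob_space N" and [measurable]: "f \<in> borel_measurable N"
  shows "distr (M \<Otimes>\<^sub>M N) borel (\<lambda>z. f (snd z)) = distr N borel f"
proof -
  interpret pair_prob_space M N
    using assms(1,2) by (simp add: pair_prob_space_def pair_sigma_finite_def prob_space_imp_sigma_finite)
  have "distr (M \<Otimes>\<^sub>M N) borel (\<lambda>z. f (snd z)) = distr (distr (N \<Otimes>\<^sub>M M) (M \<Otimes>\<^sub>M N) (\<lambda>(x, y). (y, x))) borel (\<lambda>z. f (snd z))"
    by (simp add: distr_pair_swap[symmetric])
  also have "\<dots> = distr (N \<Otimes>\<^sub>M M) borel (\<lambda>z. f (fst z))"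
    by (subst distr_distr) (auto simp: comp_def case_prod_beta)
  finally show ?thesis
    using distr_pair_measure_comp_fst[OF assms(1,3)] by simp
qed

lemma distr_pair_measure_Pair:
  fixes f :: "'a \<Rightarrow> real" and g :: "'b \<Rightarrow> real"
  assumes "prob_space M" and "prob_space N"
    and [measurable]: "f \<in> borel_measurable M" "g \<in> borel_measurable N"
  shows "distr (M \<Otimes>\<^sub>M N) borel (\<lambda>z. (f (fst z), g (snd z))) = distr M borel f \<Otimes>\<^sub>M distr N borel g"
proof -
  have "distr M borel f \<Otimes>\<^sub>M distr N borel g = distr (M \<Otimes>\<^sub>M N) (borel \<Otimes>\<^sub>M borel) (\<lambda>(x, y). (f x, g y))"
    using assms by (intro pair_measure_distr prob_space_imp_sigma_finite prob_space.prob_space_distr) auto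
  then show ?thesis
    by (simp add: borel_prod case_prod_beta')
qed

definition mean_abs_difference :: "real measure \<Rightarrow> ennreal" where
  "mean_abs_difference \<mu> = (\<integral>\<^sup>+ p. ennreal \<bar>fst p - snd p\<bar> \<partial>(\<mu> \<Otimes>\<^sub>M \<mu>))"

lemma mean_abs_difference_le_eVar:
  assumes [measurable]: "X \<in> borel_measurable M"
  shows "mean_abs_difference (distr M borel X) \<le> eVar M X"
  unfolding eVar_def eCov_def emd_def
proof (rule INF_greatest)
  fix \<gamma> assume "\<gamma> \<in> couplings (distr M borel (\<lambda>\<omega>. (X \<omega>, X \<omega>))) (distr M borel X \<Otimes>\<^sub>M distr M borel X)"
  then have [measurable_cong]: "sets \<gamma> = sets (borel :: ((real \<times> real) \<times> (real \<times> real)) measure)"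
    and diagonal: "distr \<gamma> borel fst = distr M borel (\<lambda>\<omega>. (X \<omega>, X \<omega>))"
    and product: "distr \<gamma> borel snd = distr M borel X \<Otimes>\<^sub>M distr M borel X"
    unfolding couplings_def by auto
  \<comment> \<open>The first marginal of \<open>\<gamma>\<close> lives on the diagonal, so the triangle inequality
    \<open>\<bar>x' - y'\<bar> \<le> d((x, y), (x', y')) + \<bar>x - y\<bar>\<close> costs nothing on average.\<close>
  have "mean_abs_difference (distr M borel X) = (\<integral>\<^sup>+ z. ennreal \<bar>fst (snd z) - snd (snd z)\<bar> \<partial>\<gamma>)"
    unfolding mean_abs_difference_def product[symmetric] by (rule nn_integral_distr) auto
  also have "\<dots> \<le> (\<integral>\<^sup>+ z. ennreal (manhattan (fst z) (snd z)) + ennreal \<bar>fst (fst z) - snd (fst z)\<bar> \<partial>\<gamma>)"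
    by (intro nn_integral_mono) (auto simp: manhattan_def simp flip: ennreal_plus)
  also have "\<dots> = (\<integral>\<^sup>+ z. ennreal (manhattan (fst z) (snd z)) \<partial>\<gamma>)
      + (\<integral>\<^sup>+ z. ennreal \<bar>fst (fst z) - snd (fst z)\<bar> \<partial>\<gamma>)"
    by (rule nn_integral_add) (auto simp: manhattan_def)
  also have "(\<integral>\<^sup>+ z. ennreal \<bar>fst (fst z) - snd (fst z)\<bar> \<partial>\<gamma>) = (\<integral>\<^sup>+ p. ennreal \<bar>fst p - snd p\<bar> \<partial>distr \<gamma> borel fst)"
    by (rule nn_integral_distr[symmetric]) auto
  also have "\<dots> = 0"
    unfolding diagonal by (subst nn_integral_distr) auto
  finally show "mean_abs_difference (distr M borel X) \<le> (\<integral>\<^sup>+ z. ennreal (manhattan (fst z) (snd z)) \<partial>\<gamma>)"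
    by simp
qed

lemma mean_abs_difference_distr:
  assumes "prob_space M" and [measurable]: "X \<in> borel_measurable M"
  shows "mean_abs_difference (distr M borel X) = (\<integral>\<^sup>+ z. ennreal \<bar>X (fst z) - X (snd z)\<bar> \<partial>(M \<Otimes>\<^sub>M M))"
  unfolding mean_abs_difference_def distr_pair_measure_Pair[OF assms(1,1,2,2), symmetric]
  by (subst nn_integral_distr) auto

lemma eCov_le_mean_abs_difference:
  fixes X Y :: "'a \<Rightarrow> real"
  assumes "prob_space M" and [measurable]: "X \<in> borel_measurable M" "Y \<in> borel_measurable M"
  shows "eCov M X Y \<le> mean_abs_difference (distr M borel X)"
    and "eCov M X Y \<le> mean_abs_difference (distr M borel Y)"
proof -
  have MM: "prob_space (M \<Otimes>\<^sub>M M)"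
    using assms(1) by (simp add: prob_space_pair)
  have independent: "distr (M \<Otimes>\<^sub>M M) borel (\<lambda>z. (X (fst z), Y (snd z))) = distr M borel X \<Otimes>\<^sub>M distr M borel Y"
    by (rule distr_pair_measure_Pair) (use assms(1) in auto)
  \<comment> \<open>Couple \<open>(X, Y)\<close> with \<open>(X', Y)\<close> resp. \<open>(X, Y')\<close>, where \<open>(X', Y')\<close> is an independent copy of \<open>(X, Y)\<close>.\<close>
  have "eCov M X Y \<le> (\<integral>\<^sup>+ z. ennreal (\<bar>X (snd z) - X (fst z)\<bar> + \<bar>Y (snd z) - Y (snd z)\<bar>) \<partial>(M \<Otimes>\<^sub>M M))"
    by (rule eCov_le_coupling[OF MM _ _ _ _ _ independent])
      (use distr_pair_measure_comp_snd[OF assms(1,1), of "\<lambda>\<omega>. (X \<omega>, Y \<omega>)"] in auto)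
  then show "eCov M X Y \<le> mean_abs_difference (distr M borel X)"
    by (simp add: mean_abs_difference_distr[OF assms(1)] abs_minus_commute)
  have "eCov M X Y \<le> (\<integral>\<^sup>+ z. ennreal (\<bar>X (fst z) - X (fst z)\<bar> + \<bar>Y (fst z) - Y (snd z)\<bar>) \<partial>(M \<Otimes>\<^sub>M M))"
    by (rule eCov_le_coupling[OF MM _ _ _ _ _ independent])
      (use distr_pair_measure_comp_fst[OF assms(1), of "\<lambda>\<omega>. (X \<omega>, Y \<omega>)"] in auto)
  then show "eCov M X Y \<le> mean_abs_difference (distr M borel Y)"
    by (simp add: mean_abs_difference_distr[OF assms(1)])
qed

lemma mean_abs_difference_normal:
  assumes "prob_space M" and "distributed M lborel X (normal_density m \<sigma>)" and "\<sigma> > 0"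
  shows "mean_abs_difference (distr M borel X) = ennreal (sqrt (2 * \<sigma>\<^sup>2) * sqrt (2 / pi))"
proof -
  interpret prob_space M by fact
  have [measurable]: "X \<in> borel_measurable M"
    using distributed_measurable[OF assms(2)] by simp
  interpret MM: prob_space "M \<Otimes>\<^sub>M M"
    by (simp add: prob_space_pair prob_space_axioms)
  have copies: "distributed (M \<Otimes>\<^sub>M M) lborel (\<lambda>z. X (fst z)) (normal_density m \<sigma>)"
    "distributed (M \<Otimes>\<^sub>M M) lborel (\<lambda>z. X (snd z)) (normal_density m \<sigma>)"
    using assms(2) distr_pair_measure_comp_fst[OF prob_space_axioms, of X]
      distr_pair_measure_comp_snd[OF prob_space_axioms prob_space_axioms, of X]
    by (auto simp: distributed_def cong: distr_cong)
  have "MM.indep_var borel (\<lambda>z. X (fst z)) borel (\<lambda>z. X (snd z))"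
    using distr_pair_measure_Pair[OF prob_space_axioms prob_space_axioms, of X X]
      distr_pair_measure_comp_fst[OF prob_space_axioms, of X]
      distr_pair_measure_comp_snd[OF prob_space_axioms prob_space_axioms, of X]
    by (subst MM.indep_var_distribution_eq) (simp add: borel_prod)
  then have "distributed (M \<Otimes>\<^sub>M M) lborel (\<lambda>z. X (fst z) - X (snd z)) (normal_density (m - m) (sqrt (\<sigma>\<^sup>2 + \<sigma>\<^sup>2)))"
    using copies assms(3) by (intro MM.diff_indep_normal) auto
  from normal_distributed_mean_abs_dev[OF this]
  have "(\<integral>\<^sup>+ z. ennreal \<bar>X (fst z) - X (snd z)\<bar> \<partial>(M \<Otimes>\<^sub>M M)) = ennreal (sqrt (\<sigma>\<^sup>2 + \<sigma>\<^sup>2) * sqrt (2 / pi))"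
    using assms(3) by simp
  also have "\<sigma>\<^sup>2 + \<sigma>\<^sup>2 = 2 * \<sigma>\<^sup>2"
    by simp
  finally have "(\<integral>\<^sup>+ z. ennreal \<bar>X (fst z) - X (snd z)\<bar> \<partial>(M \<Otimes>\<^sub>M M)) = ennreal (sqrt (2 * \<sigma>\<^sup>2) * sqrt (2 / pi))" .
  then show ?thesis
    by (simp add: mean_abs_difference_distr[OF prob_space_axioms])
qed

lemma mean_abs_difference_gaussian:
  assumes "prob_space M" and "gaussian_rv M X" and "covariance M X X > 0"
  shows "mean_abs_difference (distr M borel X) = ennreal (sqrt (2 * covariance M X X) * sqrt (2 / pi))"
proof -
  have "distributed M lborel X (normal_density (\<integral>\<omega>. X \<omega> \<partial>M) (sqrt (covariance M X X)))"
    using assms(1,2) by (cases rule: gaussian_rv_cases) (use assms(3) in auto)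
  then show ?thesis
    using mean_abs_difference_normal[OF assms(1)] assms(3) by simp
qed

lemma eVar_gaussian_ge:
  assumes "prob_space M" and "gaussian_rv M X" and "covariance M X X > 0"
  shows "ennreal (sqrt (2 * covariance M X X) * sqrt (2 / pi)) \<le> eVar M X"
  using mean_abs_difference_le_eVar[of X M] mean_abs_difference_gaussian[OF assms] assms(2)
  by (simp add: gaussian_rv_def)

section \<open>The bivariate normal case\<close>

lemma indep_var_regression_residual:
  assumes "prob_space M" and "bivariate_normal M X Y" and "covariance M X X > 0"
  defines "\<beta> \<equiv> covariance M X Y / covariance M X X"
  shows "prob_space.indep_var M borel X borel (\<lambda>\<omega>. Y \<omega> - \<beta> * X \<omega>)"
    and "prob_space.indep_var M borel (\<lambda>\<omega>. Y \<omega> - \<beta> * X \<omega>) borel X"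
proof -
  have X: "gaussian_rv M X" and Y: "gaussian_rv M Y"
    using bivariate_normal_gaussian_rv[OF assms(1,2), of 1 0 0]
      bivariate_normal_gaussian_rv[OF assms(1,2), of 0 1 0]
    by simp_all
  note integrable = gaussian_rv_integrable[OF assms(1) X] gaussian_rv_integrable[OF assms(1) Y]
  have "covariance M (\<lambda>\<omega>. 1 * X \<omega> + 0 * Y \<omega> + 0) (\<lambda>\<omega>. - \<beta> * X \<omega> + 1 * Y \<omega> + 0) = 0"
    unfolding covariance_affine_combination[OF assms(1) integrable(1,3,2,4)]
    using assms(3) by (simp add: \<beta>_def)
  then have "covariance M X (\<lambda>\<omega>. Y \<omega> - \<beta> * X \<omega>) = 0"
    by simp
  moreover have "bivariate_normal M X (\<lambda>\<omega>. Y \<omega> - \<beta> * X \<omega>)"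
    using bivariate_normal_linear[OF assms(2), of 1 0 "- \<beta>" 1] by simp
  ultimately show "prob_space.indep_var M borel X borel (\<lambda>\<omega>. Y \<omega> - \<beta> * X \<omega>)"
    and "prob_space.indep_var M borel (\<lambda>\<omega>. Y \<omega> - \<beta> * X \<omega>) borel X"
    using indep_var_of_bivariate_normal_uncorrelated[OF assms(1)]
      indep_var_of_bivariate_normal_uncorrelated[OF assms(1) bivariate_normal_commute]
    by (simp_all add: covariance_commute)
qed

lemma bivariate_normal_rotated_copy:
  fixes X Y :: "'a \<Rightarrow> real"
  assumes "prob_space M" and "bivariate_normal M X Y"
    and "covariance M X X > 0" and "covariance M Y Y > 0"
    and "k > 0" and "(covariance M X Y)\<^sup>2 = (1 - k\<^sup>2) * covariance M X X * covariance M Y Y"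
  obtains Y' where "Y' \<in> borel_measurable M"
    and "prob_space.indep_var M borel X borel Y'" and "prob_space.indep_var M borel Y' borel X"
    and "distr M borel Y' = distr M borel Y"
    and "(\<integral>\<^sup>+ \<omega>. ennreal \<bar>Y \<omega> - Y' \<omega>\<bar> \<partial>M) = ennreal (sqrt (2 * covariance M Y Y * (1 - k)) * sqrt (2 / pi))"
proof -
  interpret prob_space M by fact
  define mX mY vX vY C where "mX = (\<integral>\<omega>. X \<omega> \<partial>M)" and "mY = (\<integral>\<omega>. Y \<omega> \<partial>M)"
    and "vX = covariance M X X" and "vY = covariance M Y Y" and "C = covariance M X Y"
  define \<beta> where "\<beta> = C / vX"
  have vX: "vX > 0"
    using assms(3) by (simp add: vX_def)
  have "\<beta> * C = (1 - k\<^sup>2) * vY" and \<beta>\<beta>: "\<beta> * \<beta> * vX = (1 - k\<^sup>2) * vY"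
    using assms(6) vX by (simp_all add: \<beta>_def C_def vX_def vY_def field_simps power2_eq_square)
  note gaussian = bivariate_normal_gaussian_rv[OF assms(1,2)]
  have X: "gaussian_rv M X" and Y: "gaussian_rv M Y"
    using gaussian[of 1 0 0] gaussian[of 0 1 0] by simp_all
  then have [measurable]: "X \<in> borel_measurable M" "Y \<in> borel_measurable M"
    by (simp_all add: gaussian_rv_def)
  note integrable = gaussian_rv_integrable[OF assms(1) X] gaussian_rv_integrable[OF assms(1) Y]
  have mean: "(\<integral>\<omega>. a * X \<omega> + b * Y \<omega> + c \<partial>M) = a * mX + b * mY + c" for a b c
    using integrable by (simp add: mX_def mY_def prob_space)
  have cov: "covariance M (\<lambda>\<omega>. a * X \<omega> + b * Y \<omega> + c) (\<lambda>\<omega>. a' * X \<omega> + b' * Y \<omega> + c')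
      = a * a' * vX + (a * b' + a' * b) * C + b * b' * vY" for a b c a' b' c'
    using covariance_affine_combination[OF assms(1) integrable(1,3,2,4)] by (simp add: vX_def vY_def C_def)
  define R where "R = (\<lambda>\<omega>. Y \<omega> - \<beta> * X \<omega>)"
  have [measurable]: "R \<in> borel_measurable M"
    unfolding R_def by measurable
  have "indep_var borel X borel R" and "indep_var borel R borel X"
    using indep_var_regression_residual[OF assms(1-3)] by (simp_all add: R_def \<beta>_def C_def vX_def)
  \<comment> \<open>\<open>R\<close> has variance \<open>k\<^sup>2 vY\<close>; rescaling it by \<open>1 / k\<close> gives a copy of \<open>Y\<close>.\<close>
  define Y' where "Y' = (\<lambda>\<omega>. - \<beta> / k * X \<omega> + 1 / k * Y \<omega> + (mY - (mY - \<beta> * mX) / k))"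
  have Y'_R: "Y' = (\<lambda>r. mY + (r - (mY - \<beta> * mX)) / k) \<circ> R"
    using assms(5) by (auto simp: Y'_def R_def fun_eq_iff field_simps)
  have Y'_measurable [measurable]: "Y' \<in> borel_measurable M"
    unfolding Y'_def by measurable
  have "indep_var borel X borel Y'" and "indep_var borel Y' borel X"
    using indep_var_compose[OF \<open>indep_var borel X borel R\<close>, of id]
      indep_var_compose[OF \<open>indep_var borel R borel X\<close>, of _ _ id]
    by (auto simp: Y'_R)
  moreover have "distr M borel Y' = distr M borel Y"
  proof (rule gaussian_rv_distr_eq[OF assms(1) Y])
    show "gaussian_rv M Y'"
      unfolding Y'_def by (rule gaussian)
    show "(\<integral>\<omega>. Y' \<omega> \<partial>M) = (\<integral>\<omega>. Y \<omega> \<partial>M)"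
      unfolding Y'_def mean using assms(5) by (simp add: mY_def field_simps)
    have "covariance M Y' Y' = (\<beta> * \<beta> * vX - 2 * (\<beta> * C) + vY) / k\<^sup>2"
      unfolding Y'_def cov using assms(5) by (simp add: field_simps power2_eq_square)
    also have "\<dots> = ((1 - k\<^sup>2) * vY - 2 * ((1 - k\<^sup>2) * vY) + vY) / k\<^sup>2"
      by (simp only: \<open>\<beta> * C = (1 - k\<^sup>2) * vY\<close> \<beta>\<beta>)
    also have "\<dots> = covariance M Y Y"
      using assms(5) by (simp add: vY_def field_simps power2_eq_square)
    finally show "covariance M Y' Y' = covariance M Y Y" .
  qed (use assms(4) in simp)
  moreover have "(\<integral>\<^sup>+ \<omega>. ennreal \<bar>Y \<omega> - Y' \<omega>\<bar> \<partial>M) = ennreal (sqrt (2 * vY * (1 - k)) * sqrt (2 / pi))"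
  proof -
    define D where "D = (\<lambda>\<omega>. \<beta> / k * X \<omega> + (1 - 1 / k) * Y \<omega> + ((mY - \<beta> * mX) / k - mY))"
    have "covariance M D D
        = (\<beta> * \<beta> * vX + 2 * (\<beta> * C) * (k - 1) + (k - 1)\<^sup>2 * vY) / k\<^sup>2"
      unfolding D_def cov using assms(5) by (simp add: field_simps power2_eq_square)
    also have "\<dots> = ((1 - k\<^sup>2) * vY + 2 * ((1 - k\<^sup>2) * vY) * (k - 1) + (k - 1)\<^sup>2 * vY) / k\<^sup>2"
      by (simp only: \<open>\<beta> * C = (1 - k\<^sup>2) * vY\<close> \<beta>\<beta>)
    also have "\<dots> = 2 * vY * (1 - k)"
      using assms(5) by (simp add: field_simps power2_eq_square)
    finally have "covariance M D D = 2 * vY * (1 - k)" .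
    moreover have "(\<integral>\<omega>. D \<omega> \<partial>M) = 0"
      unfolding D_def mean using assms(5) by (simp add: field_simps)
    moreover have "D = (\<lambda>\<omega>. Y \<omega> - Y' \<omega>)"
      using assms(5) by (auto simp: D_def Y'_def fun_eq_iff field_simps)
    moreover have "gaussian_rv M D"
      unfolding D_def by (rule gaussian)
    note gaussian_rv_mean_abs_dev[OF assms(1) this]
    ultimately show ?thesis
      by simp
  qed
  ultimately show ?thesis
    using that[OF Y'_measurable] by (simp add: vY_def)
qed

lemma eCov_bivariate_normal_le:
  fixes X Y :: "'a \<Rightarrow> real"
  assumes "prob_space M" and "bivariate_normal M X Y"
    and "covariance M X X > 0" and "covariance M Y Y > 0"
    and "0 \<le> k" and "(covariance M X Y)\<^sup>2 = (1 - k\<^sup>2) * covariance M X X * covariance M Y Y"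
  shows "eCov M X Y \<le> ennreal (sqrt (2 * covariance M Y Y) * sqrt (2 / pi) * sqrt (1 - k))"
    and "eCov M X Y \<le> ennreal (sqrt (2 * covariance M X X) * sqrt (2 / pi) * sqrt (1 - k))"
proof -
  interpret prob_space M by fact
  have X: "gaussian_rv M X" and Y: "gaussian_rv M Y"
    using bivariate_normal_gaussian_rv[OF assms(1,2), of 1 0 0]
      bivariate_normal_gaussian_rv[OF assms(1,2), of 0 1 0]
    by simp_all
  then have [measurable]: "X \<in> borel_measurable M" "Y \<in> borel_measurable M"
    by (simp_all add: gaussian_rv_def)
  have split: "sqrt (2 * v * (1 - k)) * sqrt (2 / pi) = sqrt (2 * v) * sqrt (2 / pi) * sqrt (1 - k)" for v
    by (simp add: real_sqrt_mult)
  let ?bound = "\<lambda>v. ennreal (sqrt (2 * v) * sqrt (2 / pi) * sqrt (1 - k))"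
  have "eCov M X Y \<le> ?bound (covariance M Y Y) \<and> eCov M X Y \<le> ?bound (covariance M X X)"
  proof (cases "k = 0")
    case True
    then show ?thesis
      using eCov_le_mean_abs_difference[OF assms(1), of X Y]
        mean_abs_difference_gaussian[OF assms(1) X assms(3)] mean_abs_difference_gaussian[OF assms(1) Y assms(4)]
      by simp
  next
    case False
    with assms(5) have "k > 0"
      by simp
    obtain Y' where [measurable]: "Y' \<in> borel_measurable M"
      and "indep_var borel X borel Y'" and "indep_var borel Y' borel X"
      and "distr M borel Y' = distr M borel Y"
      and "(\<integral>\<^sup>+ \<omega>. ennreal \<bar>Y \<omega> - Y' \<omega>\<bar> \<partial>M) = ennreal (sqrt (2 * covariance M Y Y * (1 - k)) * sqrt (2 / pi))"
      by (rule bivariate_normal_rotated_copy[OF assms(1-4) \<open>k > 0\<close> assms(6)])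
    then have "eCov M X Y \<le> ?bound (covariance M Y Y)"
      using eCov_le_indep_copy[OF assms(1), of X Y X Y'] by (simp add: split)
    moreover have "(covariance M Y X)\<^sup>2 = (1 - k\<^sup>2) * covariance M Y Y * covariance M X X"
      using assms(6) by (simp add: covariance_commute mult_ac)
    then obtain X' where [measurable]: "X' \<in> borel_measurable M"
      and "indep_var borel Y borel X'" and "indep_var borel X' borel Y"
      and "distr M borel X' = distr M borel X"
      and "(\<integral>\<^sup>+ \<omega>. ennreal \<bar>X \<omega> - X' \<omega>\<bar> \<partial>M) = ennreal (sqrt (2 * covariance M X X * (1 - k)) * sqrt (2 / pi))"
      by (rule bivariate_normal_rotated_copy[OF assms(1) bivariate_normal_commute[OF assms(2)] assms(4,3) \<open>k > 0\<close>])
    then have "eCov M X Y \<le> ?bound (covariance M X X)"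
      using eCov_le_indep_copy[OF assms(1), of X Y X' Y] by (simp add: split)
    ultimately show ?thesis
      by simp
  qed
  then show "eCov M X Y \<le> ennreal (sqrt (2 * covariance M Y Y) * sqrt (2 / pi) * sqrt (1 - k))"
    and "eCov M X Y \<le> ennreal (sqrt (2 * covariance M X X) * sqrt (2 / pi) * sqrt (1 - k))"
    by auto
qed

lemma eCor_le:
  fixes a b q :: real
  assumes "eCov M X Y \<le> ennreal (a * q)" and "eCov M X Y \<le> ennreal (b * q)"
    and "ennreal a \<le> eVar M X" and "ennreal b \<le> eVar M Y"
    and "0 < a" and "0 < b" and "0 \<le> q"
  shows "eCor M X Y \<le> q"
proof (cases "eVar M X = \<top> \<or> eVar M Y = \<top>")
  case True
  then have "min (enn2real (eVar M X)) (enn2real (eVar M Y)) = 0"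
    by (auto simp: min_def intro: antisym)
  then show ?thesis
    using assms(7) by (simp add: eCor_def)
next
  case False
  have "enn2real (eCov M X Y) \<le> a * q" and "enn2real (eCov M X Y) \<le> b * q"
    using enn2real_mono[OF assms(1)] enn2real_mono[OF assms(2)] assms(5-7) by simp_all
  moreover have "a \<le> enn2real (eVar M X)" and "b \<le> enn2real (eVar M Y)"
    using enn2real_mono[OF assms(3)] enn2real_mono[OF assms(4)] False assms(5,6)
    by (simp_all add: top.not_eq_extremum)
  ultimately have "enn2real (eCov M X Y) \<le> min a b * q"
    by (simp add: min_def)
  also have "\<dots> \<le> min (enn2real (eVar M X)) (enn2real (eVar M Y)) * q"
    using \<open>a \<le> enn2real (eVar M X)\<close> \<open>b \<le> enn2real (eVar M Y)\<close> assms(7)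
    by (intro mult_right_mono min.mono)
  finally have "enn2real (eCov M X Y) \<le> min (enn2real (eVar M X)) (enn2real (eVar M Y)) * q" .
  moreover have "0 < min (enn2real (eVar M X)) (enn2real (eVar M Y))"
    using \<open>a \<le> enn2real (eVar M X)\<close> \<open>b \<le> enn2real (eVar M Y)\<close> assms(5,6) by simp
  ultimately show ?thesis
    by (simp add: eCor_def divide_le_eq mult.commute)
qed

lemma sqrt_one_minus_sqrt_one_minus_square_le:
  fixes \<rho> :: real
  assumes "\<rho>\<^sup>2 \<le> 1"
  shows "sqrt (1 - sqrt (1 - \<rho>\<^sup>2)) \<le> \<bar>\<rho>\<bar>"
    and "\<rho> \<notin> {-1, 0, 1} \<Longrightarrow> sqrt (1 - sqrt (1 - \<rho>\<^sup>2)) < \<bar>\<rho>\<bar>"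
proof -
  define k where "k = sqrt (1 - \<rho>\<^sup>2)"
  have k: "0 \<le> k" "k \<le> 1" and "k\<^sup>2 = 1 - \<rho>\<^sup>2"
    using assms by (auto simp: k_def)
  \<comment> \<open>Both claims reduce to \<open>1 - k \<le> 1 - k\<^sup>2 = \<rho>\<^sup>2\<close>, which is strict for \<open>0 < k < 1\<close>.\<close>
  moreover have "k * k \<le> k"
    using mult_left_le_one_le[OF k(1) k(1) k(2)] .
  ultimately have "1 - k \<le> \<rho>\<^sup>2"
    by (simp add: power2_eq_square)
  then show "sqrt (1 - sqrt (1 - \<rho>\<^sup>2)) \<le> \<bar>\<rho>\<bar>"
    using real_sqrt_le_mono by (fastforce simp: k_def)
  assume "\<rho> \<notin> {-1, 0, 1}"
  then have "0 < \<rho>\<^sup>2" and "\<rho>\<^sup>2 \<noteq> 1"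
    by (auto simp: power2_eq_1_iff)
  then have "0 < k" and "k < 1"
    using assms by (simp_all add: k_def)
  then have "k * k < k"
    using mult_strict_right_mono[of k 1 k] by simp
  then have "1 - k < \<rho>\<^sup>2"
    using \<open>k\<^sup>2 = 1 - \<rho>\<^sup>2\<close> by (simp add: power2_eq_square)
  then show "sqrt (1 - sqrt (1 - \<rho>\<^sup>2)) < \<bar>\<rho>\<bar>"
    using real_sqrt_less_mono by (fastforce simp: k_def)
qed

theorem theorem4:
  fixes M :: "'w measure" and X Y :: "'w \<Rightarrow> real" and \<rho> :: real
  assumes "prob_space M"
    and "X \<in> borel_measurable M" and "Y \<in> borel_measurable M"
    and "bivariate_normal M X Y"
    and "covariance M X X > 0" and "covariance M Y Y > 0"
    and "\<rho> = pearson M X Y"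
  shows "eCor M X Y \<le> sqrt (1 - sqrt (1 - \<rho>\<^sup>2))
         \<and> sqrt (1 - sqrt (1 - \<rho>\<^sup>2)) \<le> \<bar>\<rho>\<bar>
         \<and> (\<rho> \<notin> {-1, 0, 1} \<longrightarrow> sqrt (1 - sqrt (1 - \<rho>\<^sup>2)) < \<bar>\<rho>\<bar>)"
proof -
  have X: "gaussian_rv M X" and Y: "gaussian_rv M Y"
    using bivariate_normal_gaussian_rv[OF assms(1,4), of 1 0 0]
      bivariate_normal_gaussian_rv[OF assms(1,4), of 0 1 0]
    by simp_all
  have \<rho>: "\<rho>\<^sup>2 = (covariance M X Y)\<^sup>2 / (covariance M X X * covariance M Y Y)"
    using assms(5-7) by (simp add: pearson_def power_divide)
  note integrable = gaussian_rv_integrable[OF assms(1) X] gaussian_rv_integrable[OF assms(1) Y]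
  have "\<rho>\<^sup>2 \<le> 1"
    using covariance_Cauchy_Schwarz[OF assms(1) integrable(1,3,2,4) assms(5)] assms(5,6)
    by (simp add: \<rho> divide_le_eq)
  define k where "k = sqrt (1 - \<rho>\<^sup>2)"
  have "0 \<le> k" and "k \<le> 1" and "(covariance M X Y)\<^sup>2 = (1 - k\<^sup>2) * covariance M X X * covariance M Y Y"
    using \<open>\<rho>\<^sup>2 \<le> 1\<close> assms(5,6) by (simp_all add: k_def \<rho>)
  note upper = eCov_bivariate_normal_le[OF assms(1,4-6) this(1,3)]
  have "eCor M X Y \<le> sqrt (1 - k)"
    by (rule eCor_le[OF upper(2,1) eVar_gaussian_ge[OF assms(1) X assms(5)]
          eVar_gaussian_ge[OF assms(1) Y assms(6)]])
      (use assms(5,6) \<open>k \<le> 1\<close> in simp_all)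
  then show ?thesis
    using sqrt_one_minus_sqrt_one_minus_square_le[OF \<open>\<rho>\<^sup>2 \<le> 1\<close>] by (simp add: k_def)
qed

end
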